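(* For every integer $m\geq 4$, the cycle sun $CS_m$ and the wheel sun $WS_m$ satisfy $\eta(CS_m)=\eta(WS_m)=2$.
   Context: All graphs are finite, simple and undirected. Indices are taken modulo $m$, so $u_0=u_m$ and $v_0=v_m$. The cycle sun $CS_m$ has vertices $u_1,\dots,u_m,v_1,\dots,v_m$ and edges $(u_i,u_{i-1})$ and $(u_i,v_{i-1}),(u_i,v_i)$ for all $i\in[m]$ (so the $u_i$ form a cycle and each $v_i$ is adjacent exactly to $u_i$ and $u_{i+1}$). The wheel sun $WS_m$ is obtained from $CS_m$ by adding one further vertex $w$ adjacent to all of $u_1,\dots,u_m$. For a vertex $v$, $N(v)$ is its set of neighbours. For a positive integer $k$, $[k]=\{1,\dots,k\}$. For a labeling $f:V(G)\to[k]$ and $S\subseteq V(G)$, $f(S)=\sum_{u\in S}f(u)$. A labeling $f:V(G)\to[k]$ is an additive $k$-coloring if $f(N(u))\neq f(N(v))$ for every edge $(u,v)$ of $G$. The additive chromatic number $\eta(G)$ is the least $k$ for which $G$ has an additive $k$-coloring. *)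

theory Defs
  imports Main
begin

text \<open>A finite simple graph is given by a vertex set and a symmetric irreflexive
adjacency predicate.\<close>

definition nbrs :: "'a set \<Rightarrow> ('a \<Rightarrow> 'a \<Rightarrow> bool) \<Rightarrow> 'a \<Rightarrow> 'a set" where
  "nbrs Vs E v = {u \<in> Vs. E v u}"

definition additive_coloring ::
  "'a set \<Rightarrow> ('a \<Rightarrow> 'a \<Rightarrow> bool) \<Rightarrow> nat \<Rightarrow> ('a \<Rightarrow> nat) \<Rightarrow> bool" where
  "additive_coloring Vs E k f \<longleftrightarrow>
     (\<forall>v\<in>Vs. f v \<in> {1..k}) \<and>
     (\<forall>u\<in>Vs. \<forall>v\<in>Vs. E u v \<longrightarrow> sum f (nbrs Vs E u) \<noteq> sum f (nbrs Vs E v))"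

definition additive_chromatic_number :: "'a set \<Rightarrow> ('a \<Rightarrow> 'a \<Rightarrow> bool) \<Rightarrow> nat" where
  "additive_chromatic_number Vs E = (LEAST k. k > 0 \<and> (\<exists>f. additive_coloring Vs E k f))"

datatype sunv = Uv nat | Vv nat | Wv

definition cs_verts :: "nat \<Rightarrow> sunv set" where
  "cs_verts m = Uv ` {..<m} \<union> Vv ` {..<m}"

definition ws_verts :: "nat \<Rightarrow> sunv set" where
  "ws_verts m = insert Wv (cs_verts m)"

fun cs_adj :: "nat \<Rightarrow> sunv \<Rightarrow> sunv \<Rightarrow> bool" where
  "cs_adj m (Uv i) (Uv j) = (i < m \<and> j < m \<and> (j = Suc i mod m \<or> i = Suc j mod m))"
| "cs_adj m (Uv i) (Vv j) = (i < m \<and> j < m \<and> (i = j \<or> i = Suc j mod m))"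
| "cs_adj m (Vv j) (Uv i) = (i < m \<and> j < m \<and> (i = j \<or> i = Suc j mod m))"
| "cs_adj m _ _ = False"

definition ws_adj :: "nat \<Rightarrow> sunv \<Rightarrow> sunv \<Rightarrow> bool" where
  "ws_adj m x y \<longleftrightarrow> cs_adj m x y \<or>
     (x = Wv \<and> (\<exists>i<m. y = Uv i)) \<or> (y = Wv \<and> (\<exists>i<m. x = Uv i))"

end

theory Submission
  imports Defs
begin

text \<open>Label the rim vertices \<open>u\<^sub>i\<close> alternately 1, 2 and every \<open>v\<^sub>i\<close> with 1; for odd \<open>m\<close> the
clash at the seam \<open>u\<^sub>m\<^sub>-\<^sub>1 u\<^sub>0\<close> is repaired by relabelling \<open>u\<^sub>m\<^sub>-\<^sub>1\<close>, \<open>v\<^sub>m\<^sub>-\<^sub>1\<close> and \<open>v\<^sub>0\<close> with 2.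
For any labelling by 1 and 2 the neighbourhood sum of \<open>v\<^sub>i\<close> is smaller than those of \<open>u\<^sub>i\<close> and
\<open>u\<^sub>i\<^sub>+\<^sub>1\<close>: the sums share one term and the three remaining labels on the rim side outweigh
the single remaining one. So only consecutive rim vertices, and in the wheel the hub,
need checking; the rim sums are 6 at even and 4 at odd positions, except near the seam.
No 1-coloring exists, since the adjacent vertices \<open>u\<^sub>0\<close>, \<open>u\<^sub>1\<close> have the same degree.\<close>

definition cyc_succ :: "nat \<Rightarrow> nat \<Rightarrow> nat" where
  "cyc_succ m i = (if Suc i = m then 0 else Suc i)"

definition cyc_pred :: "nat \<Rightarrow> nat \<Rightarrow> nat" where
  "cyc_pred m i = (if i = 0 then m - 1 else i - 1)"

lemma Suc_mod_eq_cyc_succ: "i < m \<Longrightarrow> Suc i mod m = cyc_succ m i"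
  by (auto simp: cyc_succ_def Suc_lessI)

lemma cyc_succ_less: "i < m \<Longrightarrow> cyc_succ m i < m"
  and cyc_pred_less: "i < m \<Longrightarrow> cyc_pred m i < m"
  by (auto simp: cyc_succ_def cyc_pred_def)

lemma cyc_pred_succ: "i < m \<Longrightarrow> cyc_pred m (cyc_succ m i) = i"
  and cyc_succ_pred: "i < m \<Longrightarrow> cyc_succ m (cyc_pred m i) = i"
  by (auto simp: cyc_succ_def cyc_pred_def)

lemma cyc_succ_neq: "2 \<le> m \<Longrightarrow> i < m \<Longrightarrow> cyc_succ m i \<noteq> i"
  and cyc_pred_neq: "2 \<le> m \<Longrightarrow> i < m \<Longrightarrow> cyc_pred m i \<noteq> i"
  and cyc_succ_neq_pred: "3 \<le> m \<Longrightarrow> i < m \<Longrightarrow> cyc_succ m i \<noteq> cyc_pred m i"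
  by (auto simp: cyc_succ_def cyc_pred_def)

lemma cyc_succ_eq_iff: "i < m \<Longrightarrow> j < m \<Longrightarrow> i = cyc_succ m j \<longleftrightarrow> j = cyc_pred m i"
  by (auto simp: cyc_succ_def cyc_pred_def)

lemma cs_adj_simps:
  "cs_adj m (Uv i) (Uv j) \<longleftrightarrow> i < m \<and> j < m \<and> (j = cyc_succ m i \<or> i = cyc_succ m j)"
  "cs_adj m (Uv i) (Vv j) \<longleftrightarrow> i < m \<and> j < m \<and> (i = j \<or> i = cyc_succ m j)"
  "cs_adj m (Vv j) (Uv i) \<longleftrightarrow> i < m \<and> j < m \<and> (i = j \<or> i = cyc_succ m j)"
  "\<not> cs_adj m (Vv i) (Vv j)" "\<not> cs_adj m Wv x" "\<not> cs_adj m x Wv"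
  by (auto simp: Suc_mod_eq_cyc_succ elim: cs_adj.elims)

declare cs_adj.simps [simp del]

lemma cs_nbrs_Uv:
  assumes "i < m"
  shows "nbrs (cs_verts m) (cs_adj m) (Uv i) =
    {Uv (cyc_succ m i), Uv (cyc_pred m i), Vv i, Vv (cyc_pred m i)}" (is "?N = ?R")
proof (rule set_eqI)
  fix x show "x \<in> ?N \<longleftrightarrow> x \<in> ?R"
    using assms by (cases x) (auto simp: nbrs_def cs_verts_def cs_adj_simps cyc_succ_eq_iff
        cyc_succ_less cyc_pred_less cyc_succ_pred cyc_pred_succ)
qed

lemma cs_nbrs_Vv:
  assumes "i < m"
  shows "nbrs (cs_verts m) (cs_adj m) (Vv i) = {Uv i, Uv (cyc_succ m i)}" (is "?N = ?R")
proof (rule set_eqI)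
  fix x show "x \<in> ?N \<longleftrightarrow> x \<in> ?R"
    using assms by (cases x) (auto simp: nbrs_def cs_verts_def cs_adj_simps cyc_succ_less)
qed

lemma ws_nbrs_Uv: "i < m \<Longrightarrow>
    nbrs (ws_verts m) (ws_adj m) (Uv i) = insert Wv (nbrs (cs_verts m) (cs_adj m) (Uv i))"
  by (auto simp: nbrs_def ws_verts_def ws_adj_def cs_verts_def cs_adj_simps)

lemma ws_nbrs_Vv: "nbrs (ws_verts m) (ws_adj m) (Vv i) = nbrs (cs_verts m) (cs_adj m) (Vv i)"
  by (auto simp: nbrs_def ws_verts_def ws_adj_def cs_adj_simps)

lemma ws_nbrs_Wv: "nbrs (ws_verts m) (ws_adj m) Wv = Uv ` {..<m}"
  by (auto simp: nbrs_def ws_verts_def ws_adj_def cs_verts_def cs_adj_simps)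

definition u_sum :: "(sunv \<Rightarrow> nat) \<Rightarrow> nat \<Rightarrow> nat \<Rightarrow> nat" where
  "u_sum f m i = f (Uv (cyc_succ m i)) + f (Uv (cyc_pred m i)) + f (Vv i) + f (Vv (cyc_pred m i))"

definition v_sum :: "(sunv \<Rightarrow> nat) \<Rightarrow> nat \<Rightarrow> nat \<Rightarrow> nat" where
  "v_sum f m i = f (Uv i) + f (Uv (cyc_succ m i))"

lemma sum_cs_nbrs_Uv: "3 \<le> m \<Longrightarrow> i < m \<Longrightarrow> sum f (nbrs (cs_verts m) (cs_adj m) (Uv i)) = u_sum f m i"
  by (simp add: cs_nbrs_Uv u_sum_def cyc_succ_neq_pred cyc_pred_neq[symmetric] add.assoc)

lemma sum_cs_nbrs_Vv: "2 \<le> m \<Longrightarrow> i < m \<Longrightarrow> sum f (nbrs (cs_verts m) (cs_adj m) (Vv i)) = v_sum f m i"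
  by (simp add: cs_nbrs_Vv v_sum_def cyc_succ_neq[symmetric])

lemma sum_ws_nbrs_Uv:
  "3 \<le> m \<Longrightarrow> i < m \<Longrightarrow> sum f (nbrs (ws_verts m) (ws_adj m) (Uv i)) = f Wv + u_sum f m i"
  by (simp add: ws_nbrs_Uv cs_nbrs_Uv sum_cs_nbrs_Uv[symmetric])

lemma sum_ws_nbrs_Vv: "2 \<le> m \<Longrightarrow> i < m \<Longrightarrow> sum f (nbrs (ws_verts m) (ws_adj m) (Vv i)) = v_sum f m i"
  by (simp add: ws_nbrs_Vv sum_cs_nbrs_Vv)

lemma sum_ws_nbrs_Wv: "sum f (nbrs (ws_verts m) (ws_adj m) Wv) = (\<Sum>i<m. f (Uv i))"
  by (simp add: ws_nbrs_Wv sum.reindex inj_on_def)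

lemma cs_adj_cases:
  assumes "cs_adj m x y"
  obtains (rim) i where "i < m" "{x, y} = {Uv i, Uv (cyc_succ m i)}"
    | (spoke) i where "i < m" "{x, y} = {Uv i, Vv i}"
    | (spoke_succ) i where "i < m" "{x, y} = {Uv (cyc_succ m i), Vv i}"
  using assms that by (cases x; cases y) (auto simp: cs_adj_simps insert_commute)

lemma ws_adj_cases:
  assumes "ws_adj m x y"
  obtains (rim) "cs_adj m x y" | (hub) i where "i < m" "{x, y} = {Uv i, Wv}"
  using assms that unfolding ws_adj_def by (auto simp: insert_commute)

lemma v_sum_less_u_sum:
  assumes labels: "\<And>v. v \<in> cs_verts m \<Longrightarrow> f v \<in> {1..2}" and "i < m"
  shows "v_sum f m i < u_sum f m i" and "v_sum f m i < u_sum f m (cyc_succ m i)"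
proof -
  have U: "1 \<le> f (Uv j)" "f (Uv j) \<le> 2" and V: "1 \<le> f (Vv j)" if "j < m" for j
    using labels[of "Uv j"] labels[of "Vv j"] that by (auto simp: cs_verts_def)
  let ?s = "cyc_succ m i" and ?p = "cyc_pred m i"
  have "?s < m" "?p < m" "cyc_succ m ?s < m"
    using \<open>i < m\<close> by (simp_all add: cyc_succ_less cyc_pred_less)
  then show "v_sum f m i < u_sum f m i"
    using U(2)[OF \<open>i < m\<close>] U(1)[of ?p] V[OF \<open>i < m\<close>] V[of ?p]
    unfolding u_sum_def v_sum_def by linarith
  show "v_sum f m i < u_sum f m ?s"
    using U(2)[OF \<open>?s < m\<close>] U(1)[OF \<open>cyc_succ m ?s < m\<close>] V[OF \<open>i < m\<close>] V[OF \<open>?s < m\<close>]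
    unfolding u_sum_def v_sum_def cyc_pred_succ[OF \<open>i < m\<close>] by linarith
qed

lemma cs_additive_coloringI:
  assumes "3 \<le> m"
    and labels: "\<And>v. v \<in> cs_verts m \<Longrightarrow> f v \<in> {1..2}"
    and u_sums_differ: "\<And>i. i < m \<Longrightarrow> u_sum f m i \<noteq> u_sum f m (cyc_succ m i)"
  shows "additive_coloring (cs_verts m) (cs_adj m) 2 f"
proof -
  let ?S = "\<lambda>x. sum f (nbrs (cs_verts m) (cs_adj m) x)"
  have "?S x \<noteq> ?S y" if "cs_adj m x y" for x y
    using that
  proof (cases rule: cs_adj_cases)
    case (rim i)
    have "?S (Uv i) \<noteq> ?S (Uv (cyc_succ m i))"
      using \<open>3 \<le> m\<close> rim(1) u_sums_differ[OF rim(1)] by (simp add: sum_cs_nbrs_Uv cyc_succ_less)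
    then show ?thesis using rim(2) by (auto simp: doubleton_eq_iff)
  next
    case (spoke i)
    have "?S (Vv i) < ?S (Uv i)"
      using \<open>3 \<le> m\<close> spoke(1) v_sum_less_u_sum(1)[of m f, OF labels spoke(1)]
      by (simp add: sum_cs_nbrs_Uv sum_cs_nbrs_Vv)
    then show ?thesis using spoke(2) by (auto simp: doubleton_eq_iff)
  next
    case (spoke_succ i)
    have "?S (Vv i) < ?S (Uv (cyc_succ m i))"
      using \<open>3 \<le> m\<close> spoke_succ(1) v_sum_less_u_sum(2)[of m f, OF labels spoke_succ(1)]
      by (simp add: sum_cs_nbrs_Uv sum_cs_nbrs_Vv cyc_succ_less)
    then show ?thesis using spoke_succ(2) by (auto simp: doubleton_eq_iff)
  qed
  then show ?thesis using labels unfolding additive_coloring_def by blast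
qed

lemma ws_additive_coloringI:
  assumes "3 \<le> m"
    and labels: "\<And>v. v \<in> ws_verts m \<Longrightarrow> f v \<in> {1..2}"
    and u_sums_differ: "\<And>i. i < m \<Longrightarrow> u_sum f m i \<noteq> u_sum f m (cyc_succ m i)"
    and hub_sum_differs: "\<And>i. i < m \<Longrightarrow> (\<Sum>j<m. f (Uv j)) \<noteq> f Wv + u_sum f m i"
  shows "additive_coloring (ws_verts m) (ws_adj m) 2 f"
proof -
  let ?S = "\<lambda>x. sum f (nbrs (ws_verts m) (ws_adj m) x)"
  have cs_labels: "f v \<in> {1..2}" if "v \<in> cs_verts m" for v
    using labels that by (simp add: ws_verts_def)
  have "?S x \<noteq> ?S y" if "ws_adj m x y" for x y
    using that
  proof (cases rule: ws_adj_cases)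
    case rim
    then show ?thesis
    proof (cases rule: cs_adj_cases)
      case (rim i)
      have "?S (Uv i) \<noteq> ?S (Uv (cyc_succ m i))"
        using \<open>3 \<le> m\<close> rim(1) u_sums_differ[OF rim(1)] by (simp add: sum_ws_nbrs_Uv cyc_succ_less)
      then show ?thesis using rim(2) by (auto simp: doubleton_eq_iff)
    next
      case (spoke i)
      have "?S (Vv i) < ?S (Uv i)"
        using \<open>3 \<le> m\<close> spoke(1) v_sum_less_u_sum(1)[of m f, OF cs_labels spoke(1)]
        by (simp add: sum_ws_nbrs_Uv sum_ws_nbrs_Vv)
      then show ?thesis using spoke(2) by (auto simp: doubleton_eq_iff)
    next
      case (spoke_succ i)
      have "?S (Vv i) < ?S (Uv (cyc_succ m i))"
        using \<open>3 \<le> m\<close> spoke_succ(1) v_sum_less_u_sum(2)[of m f, OF cs_labels spoke_succ(1)]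
        by (simp add: sum_ws_nbrs_Uv sum_ws_nbrs_Vv cyc_succ_less)
      then show ?thesis using spoke_succ(2) by (auto simp: doubleton_eq_iff)
    qed
  next
    case (hub i)
    have "?S (Uv i) \<noteq> ?S Wv"
      using \<open>3 \<le> m\<close> hub(1) hub_sum_differs[OF hub(1)] by (simp add: sum_ws_nbrs_Uv sum_ws_nbrs_Wv)
    then show ?thesis using hub(2) by (auto simp: doubleton_eq_iff)
  qed
  then show ?thesis using labels unfolding additive_coloring_def by blast
qed

lemma additive_1_coloring_degree_neq:
  assumes "additive_coloring Vs E 1 f" "x \<in> Vs" "y \<in> Vs" "E x y"
  shows "card (nbrs Vs E x) \<noteq> card (nbrs Vs E y)"
proof -
  have "sum f (nbrs Vs E v) = card (nbrs Vs E v)" for v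
  proof -
    have "sum f (nbrs Vs E v) = (\<Sum>u\<in>nbrs Vs E v. 1)"
      using assms(1) by (intro sum.cong) (auto simp: additive_coloring_def nbrs_def)
    then show ?thesis by simp
  qed
  then show ?thesis using assms unfolding additive_coloring_def by metis
qed

lemma cs_no_additive_1_coloring:
  assumes "3 \<le> m" shows "\<not> additive_coloring (cs_verts m) (cs_adj m) 1 f"
proof
  have deg: "card (nbrs (cs_verts m) (cs_adj m) (Uv i)) = 4" if "i < m" for i
    using sum_cs_nbrs_Uv[OF assms that, of "\<lambda>_. 1"] by (simp add: u_sum_def)
  have "cs_adj m (Uv 0) (Uv 1)" "Uv 0 \<in> cs_verts m" "Uv 1 \<in> cs_verts m"
    using assms by (auto simp: cs_adj_simps cyc_succ_def cs_verts_def)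
  moreover assume "additive_coloring (cs_verts m) (cs_adj m) 1 f"
  ultimately show False
    using additive_1_coloring_degree_neq deg[of 0] deg[of 1] assms by fastforce
qed

lemma ws_no_additive_1_coloring:
  assumes "3 \<le> m" shows "\<not> additive_coloring (ws_verts m) (ws_adj m) 1 f"
proof
  have deg: "card (nbrs (ws_verts m) (ws_adj m) (Uv i)) = 5" if "i < m" for i
    using sum_ws_nbrs_Uv[OF assms that, of "\<lambda>_. 1"] by (simp add: u_sum_def)
  have "ws_adj m (Uv 0) (Uv 1)" "Uv 0 \<in> ws_verts m" "Uv 1 \<in> ws_verts m"
    using assms by (auto simp: ws_adj_def cs_adj_simps cyc_succ_def ws_verts_def cs_verts_def)
  moreover assume "additive_coloring (ws_verts m) (ws_adj m) 1 f"
  ultimately show False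
    using additive_1_coloring_degree_neq deg[of 0] deg[of 1] assms by fastforce
qed

lemma additive_chromatic_number_eq_2I:
  assumes "additive_coloring Vs E 2 f" "\<And>g. \<not> additive_coloring Vs E 1 g"
  shows "additive_chromatic_number Vs E = 2"
  unfolding additive_chromatic_number_def
proof (rule Least_equality)
  show "0 < (2::nat) \<and> (\<exists>f. additive_coloring Vs E 2 f)" using assms(1) by auto
next
  fix k :: nat assume "0 < k \<and> (\<exists>f. additive_coloring Vs E k f)"
  then show "2 \<le> k" using assms(2) by (cases "k = 1") auto
qed

definition sun_labeling :: "nat \<Rightarrow> sunv \<Rightarrow> nat" where
  "sun_labeling m v = (case v of
      Uv i \<Rightarrow> if even i \<and> Suc i \<noteq> m then 1 else 2
    | Vv i \<Rightarrow> if odd m \<and> (i = 0 \<or> Suc i = m) then 2 else 1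
    | Wv \<Rightarrow> 1)"

lemma sun_labeling_range: "sun_labeling m v \<in> {1..2}"
  by (simp add: sun_labeling_def split: sunv.split)

lemma u_sum_sun_labeling:
  assumes "4 \<le> m" "i < m"
  shows "u_sum (sun_labeling m) m i =
    (if odd m \<and> i = 0 then 8 else if odd m \<and> (i = 1 \<or> Suc (Suc i) = m) then 5
     else if even i then 6 else 4)"
  using assms by (auto simp: u_sum_def sun_labeling_def cyc_succ_def cyc_pred_def)

lemma u_sum_sun_labeling_neq_succ:
  assumes "4 \<le> m" "i < m"
  shows "u_sum (sun_labeling m) m i \<noteq> u_sum (sun_labeling m) m (cyc_succ m i)"
proof (cases "Suc i = m")
  case True
  then show ?thesis
    using assms by (simp add: u_sum_sun_labeling cyc_succ_def) presburger
next
  case False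
  then have "Suc i < m" using assms(2) by simp
  then show ?thesis
    using assms False by (simp add: u_sum_sun_labeling cyc_succ_def) presburger
qed

lemma sum_lessThan_alternating: "(\<Sum>i<n. if even i then 1 else 2 :: nat) = n + n div 2"
  by (induction n) auto

lemma hub_sum_sun_labeling:
  assumes "0 < m" shows "(\<Sum>i<m. sun_labeling m (Uv i)) = 2 * m - m div 2"
proof -
  obtain n where m: "m = Suc n" using assms by (cases m) auto
  have "(\<Sum>i<m. sun_labeling m (Uv i)) = (\<Sum>i<n. if even i then 1 else 2) + 2"
    unfolding m by (simp add: sun_labeling_def)
  then show ?thesis unfolding sum_lessThan_alternating m by simp
qed

lemma hub_sum_sun_labeling_neq:
  assumes "4 \<le> m" "i < m"
  shows "(\<Sum>j<m. sun_labeling m (Uv j)) \<noteq> sun_labeling m Wv + u_sum (sun_labeling m) m i"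
proof -
  let ?u = "u_sum (sun_labeling m) m i"
  have hub: "(\<Sum>j<m. sun_labeling m (Uv j)) = 2 * m - m div 2" "sun_labeling m Wv = 1"
    using assms by (simp add: hub_sum_sun_labeling) (simp add: sun_labeling_def)
  show ?thesis
  proof (cases "even m")
    case True
    then obtain k where "m = 2 * k" by blast
    moreover have "?u = 4 \<or> ?u = 6"
      using assms True by (simp add: u_sum_sun_labeling)
    ultimately show ?thesis unfolding hub by presburger
  next
    case False
    then obtain k where "m = 2 * k + 1" using oddE by blast
    moreover have "?u = 4 \<or> ?u = 5 \<or> ?u = 6 \<or> ?u = 8"
      using assms by (simp add: u_sum_sun_labeling)
    ultimately show ?thesis unfolding hub using assms(1) by presburger
  qed
qed

theorem mainTheorem13:
  fixes m :: nat
  assumes "m \<ge> 4"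
  shows "additive_chromatic_number (cs_verts m) (cs_adj m) = 2 \<and>
         additive_chromatic_number (ws_verts m) (ws_adj m) = 2"
proof
  have "3 \<le> m" using assms by simp
  note labeling_facts = \<open>3 \<le> m\<close> sun_labeling_range u_sum_sun_labeling_neq_succ[OF assms]
  show "additive_chromatic_number (cs_verts m) (cs_adj m) = 2"
    by (rule additive_chromatic_number_eq_2I[OF cs_additive_coloringI[OF labeling_facts]
        cs_no_additive_1_coloring[OF \<open>3 \<le> m\<close>]])
  show "additive_chromatic_number (ws_verts m) (ws_adj m) = 2"
    by (rule additive_chromatic_number_eq_2I[OF ws_additive_coloringI[OF labeling_facts
        hub_sum_sun_labeling_neq[OF assms]] ws_no_additive_1_coloring[OF \<open>3 \<le> m\<close>]])
qed

end
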